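(* Consider the regression model $Y_i=f(Z_i)+\xi_i$, $i=1,\dots,n$, with deterministic design points $Z_i$ in an arbitrary set $\mathcal Z$, arbitrary $f:\mathcal Z\to\mathbb R$, and i.i.d. zero-mean errors $\xi_i$ whose distribution satisfies Assumption N (see context) with some $t_0\in(0,\infty]$ and some bounded Borel $v:\mathbb R\to\mathbb R_+$. Let $f_1,\dots,f_M:\mathcal Z\to\mathbb R$ be given functions, and let $L\in(0,+\infty]$ be the smallest positive number such that $\max_{i}|f_j(Z_i)-f_k(Z_i)|\le L$ for all $j,k\in\{1,\dots,M\}$. Then for the exponentially weighted aggregate $\widehat f_n$ with the uniform prior $\pi(\{j\})=1/M$, $j=1,\dots,M$, and any $\beta\ge\max(4\|v\|_\infty,2L/t_0)$, $$\mathbf E\big[\|\widehat f_n-f\|_n^2\big]\le\min_{j=1,\dots,M}\|f_j-f\|_n^2+\frac{\beta\log M}{n}.$$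
   Context: $\|h\|_n=\big(\frac1n\sum_{i=1}^n h(Z_i)^2\big)^{1/2}$. With $\mathbf Y=(Y_1,\dots,Y_n)^\top$ and $\boldsymbol f_j=(f_j(Z_1),\dots,f_j(Z_n))^\top$, the exponentially weighted aggregate with prior $\pi$ on $\{1,\dots,M\}$ and temperature $\beta>0$ is $\widehat f_n=\sum_{j=1}^M w_j f_j$ with $w_j\propto\exp\{-\beta^{-1}\|\mathbf Y-\boldsymbol f_j\|_2^2\}\pi(\{j\})$, $\sum_j w_j=1$. $\|v\|_\infty$ is the $L_\infty(\mathbb R)$-norm of $v$; convention $\frac{+\infty}{+\infty}=0$. Assumption N: for any $\gamma>0$ small enough there exist a probability space and random variables $\xi,\zeta$ on it such that (i) $\xi$ has the same distribution as the errors $\xi_i$; (ii) $\xi+\zeta$ has the same distribution as $(1+\gamma)\xi$ and $\mathbf E[\zeta\mid\xi]=0$; (iii) there exist $t_0\in(0,\infty]$ and a bounded Borel function $v:\mathbb R\to\mathbb R_+$ such that $\limsup_{\gamma\to0}\sup_{(t,a)\in[-t_0,t_0]\times\mathrm{supp}(\xi)}\frac{\log\mathbf E[e^{t\zeta}\mid\xi=a]}{t^2\gamma v(a)}\le1$. *)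

theory Defs
  imports "HOL-Probability.Probability"
begin

definition emp_norm :: "nat \<Rightarrow> (nat \<Rightarrow> 'z) \<Rightarrow> ('z \<Rightarrow> real) \<Rightarrow> real" where
  "emp_norm n Z h = sqrt ((1 / real n) * (\<Sum>i\<in>{1..n}. (h (Z i))\<^sup>2))"

definition ewa_weight ::
  "nat \<Rightarrow> nat \<Rightarrow> (nat \<Rightarrow> 'z) \<Rightarrow> (nat \<Rightarrow> 'z \<Rightarrow> real) \<Rightarrow> (nat \<Rightarrow> real) \<Rightarrow> real
     \<Rightarrow> (nat \<Rightarrow> real) \<Rightarrow> nat \<Rightarrow> real" where
  "ewa_weight n M Z fs pri \<beta> Y j =
     exp (- (\<Sum>i\<in>{1..n}. (Y i - fs j (Z i))\<^sup>2) / \<beta>) * pri j /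
     (\<Sum>k\<in>{1..M}. exp (- (\<Sum>i\<in>{1..n}. (Y i - fs k (Z i))\<^sup>2) / \<beta>) * pri k)"

definition ewa ::
  "nat \<Rightarrow> nat \<Rightarrow> (nat \<Rightarrow> 'z) \<Rightarrow> (nat \<Rightarrow> 'z \<Rightarrow> real) \<Rightarrow> (nat \<Rightarrow> real) \<Rightarrow> real
     \<Rightarrow> (nat \<Rightarrow> real) \<Rightarrow> 'z \<Rightarrow> real" where
  "ewa n M Z fs pri \<beta> Y z = (\<Sum>j\<in>{1..M}. ewa_weight n M Z fs pri \<beta> Y j * fs j z)"

definition dist_support :: "real measure \<Rightarrow> real set" where
  "dist_support D = {a. \<forall>e>0. emeasure D (ball a e) > 0}"

text \<open>For each small gamma the joint law of (xi, zeta) is described by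
  the law D of xi and a Markov kernel K gamma (regular conditional law of zeta given xi),
  so that E[g(zeta) | xi = a] = integral of g w.r.t. K gamma a.
  Item (iii) (limsup <= 1) is written in epsilon-delta form, with the ratio inequality
  log E[e^{t zeta}|xi=a] / (t^2 gamma v(a)) <= 1 + eps written multiplicatively
  (exponentiated).\<close>
definition assumption_N :: "real measure \<Rightarrow> ereal \<Rightarrow> (real \<Rightarrow> real) \<Rightarrow> bool" where
  "assumption_N D t0 v \<longleftrightarrow>
     t0 > 0 \<and> v \<in> borel_measurable borel \<and> (\<forall>a. v a \<ge> 0) \<and> bounded (range v) \<and>
     (\<exists>\<gamma>0>0. \<exists>K :: real \<Rightarrow> real \<Rightarrow> real measure.
        (\<forall>\<gamma>\<in>{0<..<\<gamma>0}.
           K \<gamma> \<in> borel \<rightarrow>\<^sub>M prob_algebra borel \<and>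
           (\<integral>\<^sup>+ a. \<integral>\<^sup>+ z. ennreal \<bar>z\<bar> \<partial>K \<gamma> a \<partial>D) < \<infinity> \<and>
           (AE a in D. (\<integral> z. z \<partial>K \<gamma> a) = 0) \<and>
           D \<bind> (\<lambda>a. distr (K \<gamma> a) borel (\<lambda>z. a + z)) = distr D borel (\<lambda>x. (1 + \<gamma>) * x)) \<and>
        (\<forall>\<epsilon>>0. \<exists>\<delta>>0. \<forall>\<gamma>\<in>{0<..<min \<delta> \<gamma>0}. \<forall>t a.
           ereal \<bar>t\<bar> \<le> t0 \<longrightarrow> a \<in> dist_support D \<longrightarrow>
           (\<integral>\<^sup>+ z. ennreal (exp (t * z)) \<partial>K \<gamma> a)
              \<le> ennreal (exp ((1 + \<epsilon>) * t\<^sup>2 * \<gamma> * v a))))"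

end

theory Submission
  imports Defs
begin

text \<open>Write \<open>\<xi>\<close> for the noise and \<open>d\<^sub>j\<close> for \<open>f\<^sub>j - f\<close> at the design points. Pointwise in
  \<open>\<xi>\<close>, \<open>n \<parallel>f\<^sub>n - f\<parallel>\<^sub>n\<^sup>2\<close> equals the Gibbs average of the costs \<open>\<parallel>\<xi> - d\<^sub>j\<parallel>\<^sup>2\<close>, minus \<open>\<parallel>\<xi>\<parallel>\<^sup>2\<close>,
  plus \<open>\<Sum>\<^sub>i (2 \<xi>\<^sub>i m\<^sub>i - V\<^sub>i)\<close>, where \<open>m\<^sub>i\<close> and \<open>V\<^sub>i\<close> are the mean and variance of \<open>d\<^sub>j(Z\<^sub>i)\<close>
  under the weights. The Gibbs variational inequality bounds the average cost by
  \<open>\<parallel>\<xi> - d\<^sub>k\<parallel>\<^sup>2 + \<beta> log M\<close>, whose expectation is \<open>\<parallel>d\<^sub>k\<parallel>\<^sup>2 + E \<parallel>\<xi>\<parallel>\<^sup>2 + \<beta> log M\<close>.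

  It remains to prove the Stein-type inequality \<open>E[\<xi>\<^sub>i m\<^sub>i] \<le> E[V\<^sub>i] / 2\<close>. As a function of \<open>\<xi>\<^sub>i\<close>
  alone, \<open>m\<^sub>i = H'\<close> and \<open>V\<^sub>i = (\<beta>/2) H''\<close> for the convex log-partition function \<open>H\<close> of an
  exponential tilt. Assumption N realises \<open>(1 + \<gamma>) \<xi>\<^sub>i\<close> as \<open>\<xi>\<^sub>i + \<zeta>\<close> with \<open>\<zeta>\<close> conditionally
  centred and sub-Gaussian with variance proxy \<open>\<gamma> v(\<xi>\<^sub>i)\<close>. Comparing \<open>E H((1 + \<gamma>) \<xi>\<^sub>i)\<close> with
  \<open>E H(\<xi>\<^sub>i)\<close> from below by convexity and from above by the moment generating function of \<open>\<zeta>\<close>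
  gives \<open>\<gamma> E[\<xi>\<^sub>i m\<^sub>i] \<le> (1 + o(1)) \<gamma> E[V\<^sub>i] / 2\<close>; the conditions \<open>\<beta> \<ge> 4 \<parallel>v\<parallel>\<^sub>\<infinity>\<close> and
  \<open>\<beta> \<ge> 2 L / t\<^sub>0\<close> are what make this bound applicable. Letting \<open>\<gamma> \<rightarrow> 0\<close> concludes.\<close>

section \<open>Gibbs weights\<close>

definition gibbs_weight :: "'a set \<Rightarrow> real \<Rightarrow> ('a \<Rightarrow> real) \<Rightarrow> 'a \<Rightarrow> real" where
  "gibbs_weight J \<beta> c j = exp (- c j / \<beta>) / (\<Sum>k\<in>J. exp (- c k / \<beta>))"

lemma gibbs_weight_pos:
  assumes "finite J" "J \<noteq> {}"
  shows "gibbs_weight J \<beta> c j > 0"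
  unfolding gibbs_weight_def using assms by (intro divide_pos_pos sum_pos) auto

lemma sum_gibbs_weight:
  assumes "finite J" "J \<noteq> {}"
  shows "(\<Sum>j\<in>J. gibbs_weight J \<beta> c j) = 1"
proof -
  have "(\<Sum>k\<in>J. exp (- c k / \<beta>)) > 0" using assms by (intro sum_pos) auto
  then show ?thesis unfolding gibbs_weight_def by (simp add: sum_divide_distrib[symmetric])
qed

lemma gibbs_weight_mult_const:
  assumes "\<pi> > 0"
  shows "exp (- c j / \<beta>) * \<pi> / (\<Sum>k\<in>J. exp (- c k / \<beta>) * \<pi>) = gibbs_weight J \<beta> c j"
  unfolding gibbs_weight_def sum_distrib_right[symmetric] using assms by simp

lemma entropy_le_ln_card:
  fixes w :: "'a \<Rightarrow> real"
  assumes fin: "finite J" and w: "\<And>j. j \<in> J \<Longrightarrow> w j > 0" and sum_w: "(\<Sum>j\<in>J. w j) = 1"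
  shows "- (\<Sum>j\<in>J. w j * ln (w j)) \<le> ln (card J)"
proof -
  define N where "N = real (card J)"
  have "J \<noteq> {}" using sum_w by auto
  then have N: "N > 0" unfolding N_def using fin by (auto simp: card_gt_0_iff)
  have "(\<Sum>j\<in>J. w j * ln (1 / (N * w j))) \<le> (\<Sum>j\<in>J. w j * (1 / (N * w j) - 1))"
    using N w by (intro sum_mono mult_left_mono ln_le_minus_one) (auto intro: less_imp_le)
  also have "\<dots> = (\<Sum>j\<in>J. 1 / N - w j)"
    using N w by (intro sum.cong refl) (simp add: field_simps less_imp_neq[symmetric])
  also have "\<dots> = 0" using sum_w N by (simp add: sum_subtractf N_def)
  finally have "(\<Sum>j\<in>J. w j * ln (1 / (N * w j))) \<le> 0" .
  moreover have "(\<Sum>j\<in>J. w j * ln (1 / (N * w j))) = (\<Sum>j\<in>J. - ln N * w j - w j * ln (w j))"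
    using N w by (intro sum.cong refl) (simp add: ln_div ln_mult algebra_simps)
  then have "(\<Sum>j\<in>J. w j * ln (1 / (N * w j))) = - ln N - (\<Sum>j\<in>J. w j * ln (w j))"
    using sum_w by (simp add: sum_subtractf sum_negf sum_distrib_left[symmetric])
  ultimately show ?thesis unfolding N_def by linarith
qed

lemma gibbs_weighted_cost_le:
  fixes c :: "'a \<Rightarrow> real"
  assumes fin: "finite J" and k: "k \<in> J" and \<beta>: "\<beta> > 0"
  shows "(\<Sum>j\<in>J. gibbs_weight J \<beta> c j * c j) \<le> c k + \<beta> * ln (card J)"
proof -
  define S where "S = (\<Sum>l\<in>J. exp (- c l / \<beta>))"
  define w where "w = gibbs_weight J \<beta> c"
  have ne: "J \<noteq> {}" using k by blast
  have S: "S > 0" unfolding S_def using fin k by (intro sum_pos) auto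
  have w: "w j > 0" for j unfolding w_def by (rule gibbs_weight_pos[OF fin ne])
  have sum_w: "(\<Sum>j\<in>J. w j) = 1" unfolding w_def by (rule sum_gibbs_weight[OF fin ne])
  have c_eq: "c j = - \<beta> * ln S - \<beta> * ln (w j)" for j
  proof -
    have "ln (w j) = - c j / \<beta> - ln S"
      unfolding w_def gibbs_weight_def S_def[symmetric] using S by (simp add: ln_div)
    then show ?thesis using \<beta> by (simp add: field_simps)
  qed
  have "exp (- c k / \<beta>) \<le> S" unfolding S_def using fin k by (intro member_le_sum) auto
  then have "- c k / \<beta> \<le> ln S" using S by (simp add: ln_ge_iff)
  then have partition: "- \<beta> * ln S \<le> c k" using \<beta> by (simp add: field_simps)
  have "(\<Sum>j\<in>J. w j * c j) = (\<Sum>j\<in>J. - \<beta> * ln S * w j + \<beta> * (- (w j * ln (w j))))"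
    unfolding c_eq by (intro sum.cong refl) (simp add: algebra_simps)
  also have "\<dots> = - \<beta> * ln S + \<beta> * (- (\<Sum>j\<in>J. w j * ln (w j)))"
    using sum_w by (simp add: sum_subtractf sum_negf sum_distrib_left[symmetric])
  also have "\<dots> \<le> c k + \<beta> * ln (card J)"
    using partition entropy_le_ln_card[OF fin w sum_w] \<beta> by (intro add_mono mult_left_mono) auto
  finally show ?thesis unfolding w_def .
qed

lemma weighted_mean_sq_decomposition:
  fixes w :: "'j \<Rightarrow> real" and d :: "'j \<Rightarrow> 'i \<Rightarrow> real" and \<xi> :: "'i \<Rightarrow> real"
  assumes sum_w: "(\<Sum>j\<in>J. w j) = 1"
  defines "m \<equiv> \<lambda>i. \<Sum>j\<in>J. w j * d j i"
  shows "(\<Sum>i\<in>I. (m i)\<^sup>2) =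
     (\<Sum>j\<in>J. w j * (\<Sum>i\<in>I. (\<xi> i - d j i)\<^sup>2)) - (\<Sum>i\<in>I. (\<xi> i)\<^sup>2)
     + (\<Sum>i\<in>I. 2 * \<xi> i * m i - (\<Sum>j\<in>J. w j * (d j i - m i)\<^sup>2))"
proof -
  define s where "s i = (\<Sum>j\<in>J. w j * (d j i)\<^sup>2)" for i
  have cost: "(\<Sum>j\<in>J. w j * (\<xi> i - d j i)\<^sup>2) = (\<xi> i)\<^sup>2 - 2 * \<xi> i * m i + s i" for i
  proof -
    have "(\<Sum>j\<in>J. w j * (\<xi> i - d j i)\<^sup>2)
        = (\<Sum>j\<in>J. (\<xi> i)\<^sup>2 * w j - 2 * \<xi> i * (w j * d j i) + w j * (d j i)\<^sup>2)"
      by (intro sum.cong refl) (simp add: power2_diff algebra_simps)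
    also have "\<dots> = (\<xi> i)\<^sup>2 * (\<Sum>j\<in>J. w j) - 2 * \<xi> i * m i + s i"
      by (simp add: sum.distrib sum_subtractf sum_distrib_left m_def s_def)
    finally show ?thesis using sum_w by simp
  qed
  have spread: "(\<Sum>j\<in>J. w j * (d j i - m i)\<^sup>2) = s i - (m i)\<^sup>2" for i
  proof -
    have "(\<Sum>j\<in>J. w j * (d j i - m i)\<^sup>2)
        = (\<Sum>j\<in>J. w j * (d j i)\<^sup>2 - 2 * m i * (w j * d j i) + (m i)\<^sup>2 * w j)"
      by (intro sum.cong refl) (simp add: power2_diff algebra_simps)
    also have "\<dots> = s i - 2 * m i * m i + (m i)\<^sup>2 * (\<Sum>j\<in>J. w j)"
      by (simp add: sum.distrib sum_subtractf sum_distrib_left m_def s_def)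
    finally show ?thesis using sum_w by (simp add: power2_eq_square)
  qed
  have "(\<Sum>j\<in>J. w j * (\<Sum>i\<in>I. (\<xi> i - d j i)\<^sup>2)) = (\<Sum>i\<in>I. \<Sum>j\<in>J. w j * (\<xi> i - d j i)\<^sup>2)"
    by (simp add: sum_distrib_left sum.swap[of _ J I])
  then show ?thesis by (simp add: cost spread sum.distrib sum_subtractf algebra_simps)
qed

lemma (in finite_measure) integrable_affine_growth:
  fixes X g :: "'a \<Rightarrow> real"
  assumes "integrable M X" "g \<in> borel_measurable M"
    and "\<And>x. x \<in> space M \<Longrightarrow> \<bar>g x\<bar> \<le> A + B * \<bar>X x\<bar>"
  shows "integrable M g"
proof (rule Bochner_Integration.integrable_bound)
  show "integrable M (\<lambda>x. A + B * \<bar>X x\<bar>)" using assms(1) by simp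
  show "AE x in M. norm (g x) \<le> norm (A + B * \<bar>X x\<bar>)"
    using assms(3) by (intro AE_I2) (smt (verit) real_norm_def)
qed fact

lemma integrable_integral_le_of_nn_integral_le:
  fixes f :: "'a \<Rightarrow> real"
  assumes "f \<in> borel_measurable N" "\<And>x. f x \<ge> 0" "B \<ge> 0"
    and "(\<integral>\<^sup>+ x. ennreal (f x) \<partial>N) \<le> ennreal B"
  shows "integrable N f" "(\<integral>x. f x \<partial>N) \<le> B"
proof -
  show int: "integrable N f"
    using assms by (intro integrableI_bounded) (auto simp: le_less_trans[OF assms(4)])
  have "ennreal (\<integral>x. f x \<partial>N) = (\<integral>\<^sup>+ x. ennreal (f x) \<partial>N)"
    using int assms(2) by (intro nn_integral_eq_integral[symmetric]) auto
  with assms(4) have "ennreal (\<integral>x. f x \<partial>N) \<le> ennreal B" by simp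
  then show "(\<integral>x. f x \<partial>N) \<le> B" using assms(3) by (simp add: ennreal_le_iff)
qed

lemma nn_integral_scaled_le_of_kernel:
  fixes D :: "real measure" and K :: "real \<Rightarrow> real measure" and g b :: "real \<Rightarrow> ennreal"
  assumes sets_D: "sets D = sets borel" and K: "K \<in> borel \<rightarrow>\<^sub>M prob_algebra borel"
    and coupling: "D \<bind> (\<lambda>a. distr (K a) borel (\<lambda>z. a + z)) = distr D borel (\<lambda>x. c * x)"
    and g: "g \<in> borel_measurable borel"
    and bound: "AE a in D. (\<integral>\<^sup>+ z. g (a + z) \<partial>K a) \<le> b a"
  shows "(\<integral>\<^sup>+ x. g (c * x) \<partial>D) \<le> (\<integral>\<^sup>+ a. b a \<partial>D)"
proof -
  have meas_D: "measurable D N = measurable borel N" for N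
    by (rule measurable_cong_sets[OF sets_D refl])
  have sets_K: "sets (K a) = sets borel" for a
    using measurable_space[OF K, of a] by (simp add: space_prob_algebra)
  have shifted: "(\<lambda>a. distr (K a) borel (\<lambda>z. a + z)) \<in> D \<rightarrow>\<^sub>M subprob_algebra borel"
    unfolding meas_D by (intro measurable_prob_algebraD measurable_distr_prob_space2[OF K]) simp
  have "(\<integral>\<^sup>+ x. g (c * x) \<partial>D) = (\<integral>\<^sup>+ u. g u \<partial>distr D borel (\<lambda>x. c * x))"
    using g by (intro nn_integral_distr[symmetric]) (simp_all add: meas_D)
  also have "\<dots> = (\<integral>\<^sup>+ a. \<integral>\<^sup>+ u. g u \<partial>distr (K a) borel (\<lambda>z. a + z) \<partial>D)"
    unfolding coupling[symmetric] using g by (intro nn_integral_bind[OF _ shifted]) simp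
  also have "\<dots> = (\<integral>\<^sup>+ a. \<integral>\<^sup>+ z. g (a + z) \<partial>K a \<partial>D)"
    using g by (intro nn_integral_cong nn_integral_distr)
      (simp_all add: measurable_cong_sets[OF sets_K refl])
  also have "\<dots> \<le> (\<integral>\<^sup>+ a. b a \<partial>D)"
    by (rule nn_integral_mono_AE[OF bound])
  finally show ?thesis .
qed

lemma AE_in_dist_support:
  fixes D :: "real measure"
  assumes sets_D: "sets D = sets borel"
  shows "AE a in D. a \<in> dist_support D"
proof -
  define B where "B = {(q, r). q \<in> \<rat> \<and> r \<in> \<rat> \<and> r > 0 \<and> emeasure D (ball q r) = 0}"
  have "countable B"
    by (rule countable_subset[of _ "\<rat> \<times> \<rat>"]) (auto simp: B_def countable_rat)
  then have null: "(\<Union>(q, r)\<in>B. ball q r) \<in> null_sets D"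
    by (intro null_sets_UN') (auto simp: B_def null_sets_def sets_D)
  show ?thesis
  proof (rule AE_I'[OF null], safe)
    fix a assume "a \<in> space D" "a \<notin> dist_support D"
    then obtain e where e: "e > 0" "emeasure D (ball a e) = 0"
      unfolding dist_support_def by (auto simp: not_gr_zero)
    obtain r where r: "r \<in> \<rat>" "0 < r" "r < e / 2" using Rats_dense_in_real[of 0 "e / 2"] e by auto
    obtain q where q: "q \<in> \<rat>" "a - r < q" "q < a + r"
      using Rats_dense_in_real[of "a - r" "a + r"] r by auto
    have "ball q r \<subseteq> ball a e" using r q by (auto simp: ball_def dist_real_def)
    then have "emeasure D (ball q r) \<le> emeasure D (ball a e)"
      by (rule emeasure_mono) (simp add: sets_D)
    then have "(q, r) \<in> B" using e q r by (simp add: B_def)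
    moreover have "a \<in> ball q r" using q by (auto simp: ball_def dist_real_def)
    ultimately show "a \<in> (\<Union>(q, r)\<in>B. ball q r)" by blast
  qed
qed

lemma le_of_le_one_plus_eps_squared:
  fixes A W :: real
  assumes "\<And>\<epsilon>. 0 < \<epsilon> \<Longrightarrow> \<epsilon> \<le> 1 \<Longrightarrow> A \<le> (1 + \<epsilon>) * (1 + \<epsilon>) * W"
  shows "A \<le> W"
proof (rule tendsto_lowerbound)
  show "((\<lambda>\<epsilon>. (1 + \<epsilon>) * (1 + \<epsilon>) * W) \<longlongrightarrow> W) (at_right 0)"
    by (auto intro!: tendsto_eq_intros)
  show "\<forall>\<^sub>F \<epsilon> in at_right 0. A \<le> (1 + \<epsilon>) * (1 + \<epsilon>) * W"
    by (rule eventually_mono[OF eventually_at_right_real[OF zero_less_one]]) (use assms in auto)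
qed simp

lemma exists_exp_mult_le:
  fixes C m \<epsilon> :: real
  assumes C: "C \<ge> 0" and m: "m > 0" and \<epsilon>: "\<epsilon> > 0"
  shows "\<exists>\<gamma>\<in>{0<..<m}. exp (\<gamma> * C) \<le> 1 + \<epsilon>"
proof
  define \<gamma> where "\<gamma> = min (m / 2) (ln (1 + \<epsilon>) / (C + 1))"
  have ln_\<epsilon>: "ln (1 + \<epsilon>) > 0" using \<epsilon> by simp
  show "\<gamma> \<in> {0<..<m}" unfolding \<gamma>_def using m ln_\<epsilon> C by auto
  have "\<gamma> * C \<le> ln (1 + \<epsilon>) / (C + 1) * C"
    unfolding \<gamma>_def using C by (intro mult_right_mono) auto
  also have "\<dots> \<le> ln (1 + \<epsilon>)" using C ln_\<epsilon> by (simp add: field_simps)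
  finally show "exp (\<gamma> * C) \<le> 1 + \<epsilon>"
    using \<epsilon> by (metis exp_le_cancel_iff exp_ln add_pos_pos zero_less_one)
qed

section \<open>Exponential tilts\<close>

lemma exp_minus_one_le:
  fixes s C :: real
  assumes "0 \<le> s" "s \<le> C"
  shows "exp s - 1 \<le> s * exp C"
proof -
  have "1 - s \<le> exp (- s)" using exp_ge_add_one_self[of "- s"] by simp
  then have "exp s * (1 - s) \<le> exp s * exp (- s)" by (intro mult_left_mono) auto
  then have "exp s - 1 \<le> s * exp s" by (simp add: exp_minus field_simps)
  also have "\<dots> \<le> s * exp C" using assms by (intro mult_left_mono) auto
  finally show ?thesis .
qed

locale exponential_tilt =
  fixes J :: "'j set" and q e :: "'j \<Rightarrow> real" and \<beta> :: real
  assumes finite_J: "finite J" and J_ne: "J \<noteq> {}"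
    and q_pos: "\<And>j. j \<in> J \<Longrightarrow> q j > 0" and \<beta>_pos: "\<beta> > 0"
begin

definition partition :: "real \<Rightarrow> real" where
  "partition x = (\<Sum>j\<in>J. q j * exp (2 * x * e j / \<beta>))"

definition tilt :: "'j \<Rightarrow> real \<Rightarrow> real" where
  "tilt j x = q j * exp (2 * x * e j / \<beta>) / partition x"

definition tilt_mean :: "real \<Rightarrow> real" where
  "tilt_mean x = (\<Sum>j\<in>J. tilt j x * e j)"

definition tilt_var :: "real \<Rightarrow> real" where
  "tilt_var x = (\<Sum>j\<in>J. tilt j x * (e j - tilt_mean x)\<^sup>2)"

text \<open>\<open>log_partition\<close> is convex, with derivative \<open>tilt_mean\<close> and second derivative
  \<open>2 / \<beta> * tilt_var\<close>.\<close>
definition log_partition :: "real \<Rightarrow> real" where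
  "log_partition x = \<beta> / 2 * ln (partition x)"

lemma partition_pos: "partition x > 0"
  unfolding partition_def using finite_J J_ne q_pos by (intro sum_pos) auto

lemma tilt_nonneg: "j \<in> J \<Longrightarrow> tilt j x \<ge> 0"
  unfolding tilt_def using partition_pos[of x] q_pos[of j] by simp

lemma tilt_le_1:
  assumes "j \<in> J"
  shows "tilt j x \<le> 1"
proof -
  have "q j * exp (2 * x * e j / \<beta>) \<le> partition x" unfolding partition_def
    using assms finite_J q_pos by (intro member_le_sum) (auto intro: less_imp_le)
  then show ?thesis unfolding tilt_def using partition_pos[of x] by simp
qed

lemma sum_tilt: "(\<Sum>j\<in>J. tilt j x) = 1"
  unfolding tilt_def using partition_pos[of x]
  by (simp add: sum_divide_distrib[symmetric] partition_def)

lemma partition_shift: "partition (x + z) = partition x * (\<Sum>j\<in>J. tilt j x * exp (2 * z * e j / \<beta>))"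
proof -
  have "partition x * (\<Sum>j\<in>J. tilt j x * exp (2 * z * e j / \<beta>))
      = (\<Sum>j\<in>J. q j * exp (2 * x * e j / \<beta>) * exp (2 * z * e j / \<beta>))"
    unfolding tilt_def using partition_pos[of x] by (simp add: sum_distrib_left)
  also have "\<dots> = partition (x + z)" unfolding partition_def
    by (intro sum.cong refl) (simp add: mult.assoc exp_add[symmetric] add_divide_distrib algebra_simps)
  finally show ?thesis ..
qed

lemma abs_tilt_mean_le: "\<bar>tilt_mean x\<bar> \<le> (\<Sum>j\<in>J. \<bar>e j\<bar>)"
proof -
  have "\<bar>tilt_mean x\<bar> \<le> (\<Sum>j\<in>J. \<bar>tilt j x * e j\<bar>)" unfolding tilt_mean_def by (rule sum_abs)
  also have "\<dots> \<le> (\<Sum>j\<in>J. \<bar>e j\<bar>)"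
    using tilt_nonneg tilt_le_1 by (intro sum_mono) (auto simp: abs_mult intro!: mult_left_le_one_le)
  finally show ?thesis .
qed

lemma abs_diff_tilt_mean_le:
  assumes "\<And>j k. j \<in> J \<Longrightarrow> k \<in> J \<Longrightarrow> \<bar>e j - e k\<bar> \<le> L" "j \<in> J"
  shows "\<bar>e j - tilt_mean x\<bar> \<le> L"
proof -
  have "(\<Sum>k\<in>J. tilt k x * (e j - e k)) = e j * (\<Sum>k\<in>J. tilt k x) - tilt_mean x"
    by (simp add: tilt_mean_def algebra_simps sum_subtractf sum_distrib_left)
  then have "e j - tilt_mean x = (\<Sum>k\<in>J. tilt k x * (e j - e k))" using sum_tilt[of x] by simp
  then have "\<bar>e j - tilt_mean x\<bar> \<le> (\<Sum>k\<in>J. \<bar>tilt k x * (e j - e k)\<bar>)" by (simp add: sum_abs)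
  also have "\<dots> \<le> (\<Sum>k\<in>J. tilt k x * L)"
    using assms tilt_nonneg by (intro sum_mono) (auto simp: abs_mult intro: mult_left_mono)
  also have "\<dots> = L" using sum_tilt[of x] by (simp add: sum_distrib_right[symmetric])
  finally show ?thesis .
qed

lemma tilt_var_nonneg: "tilt_var x \<ge> 0"
  unfolding tilt_var_def using tilt_nonneg by (intro sum_nonneg) auto

lemma tilt_var_le:
  assumes "\<And>j k. j \<in> J \<Longrightarrow> k \<in> J \<Longrightarrow> \<bar>e j - e k\<bar> \<le> L"
  shows "tilt_var x \<le> L\<^sup>2"
proof -
  have "tilt j x * (e j - tilt_mean x)\<^sup>2 \<le> tilt j x * L\<^sup>2" if j: "j \<in> J" for j
    using abs_diff_tilt_mean_le[OF assms j, of x] tilt_nonneg[OF j]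
    by (intro mult_left_mono) (auto simp: abs_le_square_iff[symmetric])
  then have "tilt_var x \<le> (\<Sum>j\<in>J. tilt j x * L\<^sup>2)" unfolding tilt_var_def by (rule sum_mono)
  also have "\<dots> = L\<^sup>2" using sum_tilt[of x] by (simp add: sum_distrib_right[symmetric])
  finally show ?thesis .
qed

lemma log_partition_ge_tangent: "log_partition u - log_partition x \<ge> (u - x) * tilt_mean x"
proof -
  define S where "S = (\<Sum>j\<in>J. tilt j x * exp (2 * (u - x) * e j / \<beta>))"
  have "exp (\<Sum>j\<in>J. tilt j x *\<^sub>R (2 * (u - x) * e j / \<beta>)) \<le> S"
    unfolding S_def by (rule convex_on_sum[OF finite_J J_ne exp_convex sum_tilt tilt_nonneg]) auto
  moreover have "(\<Sum>j\<in>J. tilt j x *\<^sub>R (2 * (u - x) * e j / \<beta>)) = 2 * (u - x) * tilt_mean x / \<beta>"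
    unfolding tilt_mean_def by (simp add: sum_divide_distrib sum_distrib_left algebra_simps)
  ultimately have exp_le: "exp (2 * (u - x) * tilt_mean x / \<beta>) \<le> S" by simp
  then have S_pos: "S > 0" using exp_gt_zero less_le_trans by blast
  have "log_partition u = log_partition x + \<beta> / 2 * ln S"
    using partition_shift[of x "u - x"] partition_pos[of x] S_pos
    by (simp add: log_partition_def S_def ln_mult algebra_simps)
  moreover have "2 * (u - x) * tilt_mean x / \<beta> \<le> ln S" using exp_le S_pos by (simp add: ln_ge_iff)
  ultimately show ?thesis using \<beta>_pos by (simp add: field_simps)
qed

lemma abs_log_partition_diff_le: "\<bar>log_partition u - log_partition 0\<bar> \<le> \<bar>u\<bar> * (\<Sum>j\<in>J. \<bar>e j\<bar>)"
proof -
  define B where "B = (\<Sum>j\<in>J. \<bar>e j\<bar>)"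
  have "\<bar>u * tilt_mean x\<bar> \<le> \<bar>u\<bar> * B" for x
    unfolding abs_mult B_def by (intro mult_left_mono abs_tilt_mean_le) auto
  with log_partition_ge_tangent[of u 0] log_partition_ge_tangent[of 0 u] show ?thesis
    unfolding B_def[symmetric] by (simp add: abs_le_iff) (smt (verit) abs_le_iff)
qed

lemma log_partition_shift_le:
  "log_partition (a + z) - log_partition a
     \<le> z * tilt_mean a + \<beta> / 2 * ((\<Sum>j\<in>J. tilt j a * exp (2 * (e j - tilt_mean a) / \<beta> * z)) - 1)"
proof -
  define T where "T = (\<Sum>j\<in>J. tilt j a * exp (2 * (e j - tilt_mean a) / \<beta> * z))"
  have T_pos: "T > 0" unfolding T_def
    using finite_J J_ne by (intro sum_pos) (auto simp: tilt_def partition_pos q_pos)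
  have "(\<Sum>j\<in>J. tilt j a * exp (2 * z * e j / \<beta>)) = exp (2 * z * tilt_mean a / \<beta>) * T"
    unfolding T_def sum_distrib_left
  proof (intro sum.cong refl)
    fix j
    have "2 * z * tilt_mean a / \<beta> + 2 * (e j - tilt_mean a) / \<beta> * z = 2 * z * e j / \<beta>"
      using \<beta>_pos by (simp add: field_simps)
    then show "tilt j a * exp (2 * z * e j / \<beta>)
        = exp (2 * z * tilt_mean a / \<beta>) * (tilt j a * exp (2 * (e j - tilt_mean a) / \<beta> * z))"
      by (metis exp_add mult.left_commute)
  qed
  then have "log_partition (a + z) = log_partition a + z * tilt_mean a + \<beta> / 2 * ln T"
    using partition_shift[of a z] partition_pos[of a] T_pos \<beta>_pos
    by (simp add: log_partition_def ln_mult field_simps)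
  moreover have "ln T \<le> T - 1" using T_pos by (rule ln_le_minus_one)
  ultimately show ?thesis unfolding T_def[symmetric] using \<beta>_pos
    by (simp add: mult_left_mono)
qed


lemma borel_measurable_partition[measurable]: "partition \<in> borel_measurable borel"
  unfolding partition_def by measurable

lemma borel_measurable_tilt[measurable]: "tilt j \<in> borel_measurable borel"
  unfolding tilt_def by measurable

lemma borel_measurable_tilt_mean[measurable]: "tilt_mean \<in> borel_measurable borel"
  unfolding tilt_mean_def by measurable

lemma borel_measurable_tilt_var[measurable]: "tilt_var \<in> borel_measurable borel"
  unfolding tilt_var_def by measurable

lemma borel_measurable_log_partition[measurable]: "log_partition \<in> borel_measurable borel"
  unfolding log_partition_def by measurable

lemma tilt_mgf_excess_le:
  fixes L \<gamma> \<epsilon> va a :: real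
  assumes L: "\<And>j k. j \<in> J \<Longrightarrow> k \<in> J \<Longrightarrow> \<bar>e j - e k\<bar> \<le> L"
    and va: "0 \<le> va" "4 * va \<le> \<beta>" and \<epsilon>: "0 < \<epsilon>" "\<epsilon> \<le> 1" and \<gamma>: "\<gamma> > 0"
  shows "\<beta> / 2 * ((\<Sum>j\<in>J. tilt j a * exp ((1 + \<epsilon>) * (2 * (e j - tilt_mean a) / \<beta>)\<^sup>2 * \<gamma> * va)) - 1)
         \<le> exp (\<gamma> * (2 * L\<^sup>2 / \<beta>)) * (1 + \<epsilon>) / 2 * \<gamma> * tilt_var a"
proof -
  define C where "C = \<gamma> * (2 * L\<^sup>2 / \<beta>)"
  define s where "s j = (1 + \<epsilon>) * (2 * (e j - tilt_mean a) / \<beta>)\<^sup>2 * \<gamma> * va" for j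
  have "(2 * y / \<beta>)\<^sup>2 = 4 * y\<^sup>2 / \<beta>\<^sup>2" for y
    by (simp add: power_divide power_mult_distrib)
  then have s_eq: "s j = (1 + \<epsilon>) * (4 * (e j - tilt_mean a)\<^sup>2 / \<beta>\<^sup>2) * \<gamma> * va" for j
    unfolding s_def by presburger
  have s_bounds: "0 \<le> s j \<and> s j \<le> C" if j: "j \<in> J" for j
  proof
    show "0 \<le> s j" unfolding s_def using \<epsilon> \<gamma> va by simp
    have "(e j - tilt_mean a)\<^sup>2 \<le> L\<^sup>2"
      using abs_diff_tilt_mean_le[OF L j, of a] by (simp add: abs_le_square_iff[symmetric])
    then have "s j \<le> 2 * (4 * L\<^sup>2 / \<beta>\<^sup>2) * \<gamma> * (\<beta> / 4)"
      unfolding s_eq using \<epsilon> \<gamma> va \<beta>_pos by (intro mult_mono divide_right_mono) auto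
    also have "\<dots> = C" unfolding C_def using \<beta>_pos by (simp add: power2_eq_square field_simps)
    finally show "s j \<le> C" .
  qed
  have "(\<Sum>j\<in>J. tilt j a * exp (s j)) - 1 = (\<Sum>j\<in>J. tilt j a * (exp (s j) - 1))"
    using sum_tilt[of a] by (simp add: algebra_simps sum_subtractf)
  also have "\<dots> \<le> (\<Sum>j\<in>J. tilt j a * (s j * exp C))"
    using s_bounds tilt_nonneg by (intro sum_mono mult_left_mono exp_minus_one_le) auto
  also have "\<dots> = exp C * (1 + \<epsilon>) * \<gamma> * tilt_var a * (4 * va / \<beta>\<^sup>2)"
    unfolding tilt_var_def s_eq sum_distrib_left sum_distrib_right by (intro sum.cong refl) (simp add: field_simps)
  finally have "\<beta> / 2 * ((\<Sum>j\<in>J. tilt j a * exp (s j)) - 1)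
      \<le> exp C * (1 + \<epsilon>) * \<gamma> * tilt_var a * (2 * va / \<beta>)"
    using \<beta>_pos by (simp add: mult_left_mono power2_eq_square field_simps)
  also have "\<dots> \<le> exp C * (1 + \<epsilon>) * \<gamma> * tilt_var a * (1 / 2)"
    using va \<beta>_pos \<epsilon> \<gamma> tilt_var_nonneg[of a] by (intro mult_left_mono) (auto simp: field_simps)
  finally show ?thesis unfolding s_def C_def by simp
qed

lemma integrable_log_partition_shift:
  assumes "prob_space N" "sets N = sets borel" "integrable N (\<lambda>z. z)"
  shows "integrable N (\<lambda>z. log_partition (a + z))"
proof -
  interpret N: prob_space N by fact
  define B where "B = (\<Sum>j\<in>J. \<bar>e j\<bar>)"
  have B: "B \<ge> 0" unfolding B_def by (simp add: sum_nonneg)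
  show ?thesis
  proof (rule N.integrable_affine_growth[OF assms(3)])
    fix z
    have "\<bar>log_partition (a + z) - log_partition 0\<bar> \<le> (\<bar>a\<bar> + \<bar>z\<bar>) * B"
      using abs_log_partition_diff_le[of "a + z"] B unfolding B_def[symmetric]
      by (meson abs_triangle_ineq mult_right_mono order_trans)
    then show "\<bar>log_partition (a + z)\<bar> \<le> (\<bar>log_partition 0\<bar> + B * \<bar>a\<bar>) + B * \<bar>z\<bar>"
      by (simp add: algebra_simps)
  qed (simp add: measurable_cong_sets[OF assms(2) refl])
qed

lemma integral_log_partition_shift_le:
  fixes N :: "real measure" and L \<gamma> \<epsilon> va a :: real
  assumes N: "prob_space N" "sets N = sets borel" "integrable N (\<lambda>z. z)" "(\<integral>z. z \<partial>N) = 0"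
    and L: "\<And>j k. j \<in> J \<Longrightarrow> k \<in> J \<Longrightarrow> \<bar>e j - e k\<bar> \<le> L"
    and va: "0 \<le> va" "4 * va \<le> \<beta>" and \<epsilon>: "0 < \<epsilon>" "\<epsilon> \<le> 1" and \<gamma>: "\<gamma> > 0"
    and mgf: "\<And>t. \<bar>t\<bar> \<le> 2 * L / \<beta> \<Longrightarrow>
      (\<integral>\<^sup>+ z. ennreal (exp (t * z)) \<partial>N) \<le> ennreal (exp ((1 + \<epsilon>) * t\<^sup>2 * \<gamma> * va))"
  shows "(\<integral>z. log_partition (a + z) \<partial>N)
           \<le> log_partition a + exp (\<gamma> * (2 * L\<^sup>2 / \<beta>)) * (1 + \<epsilon>) / 2 * \<gamma> * tilt_var a"
proof -
  interpret N: prob_space N by fact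
  have meas_N: "measurable N M = measurable borel M" for M
    by (rule measurable_cong_sets[OF N(2) refl])
  define t where "t j = 2 * (e j - tilt_mean a) / \<beta>" for j
  define s where "s j = (1 + \<epsilon>) * (t j)\<^sup>2 * \<gamma> * va" for j
  have mgf_t: "integrable N (\<lambda>z. exp (t j * z)) \<and> (\<integral>z. exp (t j * z) \<partial>N) \<le> exp (s j)"
    if j: "j \<in> J" for j
  proof -
    have "\<bar>t j\<bar> \<le> 2 * L / \<beta>"
      using abs_diff_tilt_mean_le[OF L j, of a] \<beta>_pos
      by (simp add: t_def abs_mult abs_divide divide_right_mono)
    then have "(\<integral>\<^sup>+ z. ennreal (exp (t j * z)) \<partial>N) \<le> ennreal (exp (s j))"
      unfolding s_def by (rule mgf)
    then show ?thesis
      using integrable_integral_le_of_nn_integral_le[of "\<lambda>z. exp (t j * z)" N "exp (s j)"]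
      by (simp add: meas_N)
  qed
  note int = integrable_log_partition_shift[OF N(1-3)]
  have int_bound: "integrable N (\<lambda>z. log_partition a + z * tilt_mean a
      + \<beta> / 2 * ((\<Sum>j\<in>J. tilt j a * exp (t j * z)) - 1))"
    using N(3) mgf_t by (intro Bochner_Integration.integrable_add Bochner_Integration.integrable_diff
        integrable_mult_right integrable_mult_left Bochner_Integration.integrable_sum) auto
  have "(\<integral>z. log_partition (a + z) \<partial>N)
      \<le> (\<integral>z. log_partition a + z * tilt_mean a + \<beta> / 2 * ((\<Sum>j\<in>J. tilt j a * exp (t j * z)) - 1) \<partial>N)"
  proof (rule integral_mono[OF int int_bound])
    fix z
    show "log_partition (a + z)
        \<le> log_partition a + z * tilt_mean a + \<beta> / 2 * ((\<Sum>j\<in>J. tilt j a * exp (t j * z)) - 1)"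
      using log_partition_shift_le[of a z] unfolding t_def by linarith
  qed
  also have "\<dots> = log_partition a + (\<integral>z. z \<partial>N) * tilt_mean a
      + \<beta> / 2 * ((\<Sum>j\<in>J. tilt j a * (\<integral>z. exp (t j * z) \<partial>N)) - 1)"
    using N(3) mgf_t by (simp add: integrable_mult_right integrable_mult_left N.prob_space
        Bochner_Integration.integrable_sum Bochner_Integration.integral_sum)
  also have "\<dots> \<le> log_partition a + \<beta> / 2 * ((\<Sum>j\<in>J. tilt j a * exp (s j)) - 1)"
    using N(4) mgf_t tilt_nonneg \<beta>_pos by (auto intro!: mult_left_mono sum_mono)
  also have "\<dots> \<le> log_partition a + exp (\<gamma> * (2 * L\<^sup>2 / \<beta>)) * (1 + \<epsilon>) / 2 * \<gamma> * tilt_var a"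
    using tilt_mgf_excess_le[OF L va \<epsilon> \<gamma>, of a] unfolding s_def t_def by simp
  finally show ?thesis .
qed

definition log_partition_gap :: "real \<Rightarrow> real" where
  "log_partition_gap u = log_partition u - log_partition 0 - u * tilt_mean 0"

lemma log_partition_gap_nonneg: "log_partition_gap u \<ge> 0"
  unfolding log_partition_gap_def using log_partition_ge_tangent[of u 0] by simp

lemma abs_log_partition_gap_le: "\<bar>log_partition_gap u\<bar> \<le> 2 * (\<Sum>j\<in>J. \<bar>e j\<bar>) * \<bar>u\<bar>"
proof -
  have "\<bar>u * tilt_mean 0\<bar> \<le> \<bar>u\<bar> * (\<Sum>j\<in>J. \<bar>e j\<bar>)"
    unfolding abs_mult by (intro mult_left_mono abs_tilt_mean_le) auto
  moreover have "\<bar>log_partition_gap u\<bar> \<le> \<bar>log_partition u - log_partition 0\<bar> + \<bar>u * tilt_mean 0\<bar>"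
    unfolding log_partition_gap_def by (rule abs_triangle_ineq4)
  moreover have "2 * (\<Sum>j\<in>J. \<bar>e j\<bar>) * \<bar>u\<bar> = \<bar>u\<bar> * (\<Sum>j\<in>J. \<bar>e j\<bar>) + \<bar>u\<bar> * (\<Sum>j\<in>J. \<bar>e j\<bar>)"
    by simp
  ultimately show ?thesis using abs_log_partition_diff_le[of u] by linarith
qed

lemma borel_measurable_log_partition_gap[measurable]: "log_partition_gap \<in> borel_measurable borel"
  unfolding log_partition_gap_def by measurable

lemma nn_integral_log_partition_gap_shift_le:
  fixes N :: "real measure" and L \<gamma> \<epsilon> va a :: real
  assumes N: "prob_space N" "sets N = sets borel" "integrable N (\<lambda>z. z)" "(\<integral>z. z \<partial>N) = 0"
    and L: "\<And>j k. j \<in> J \<Longrightarrow> k \<in> J \<Longrightarrow> \<bar>e j - e k\<bar> \<le> L"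
    and va: "0 \<le> va" "4 * va \<le> \<beta>" and \<epsilon>: "0 < \<epsilon>" "\<epsilon> \<le> 1" and \<gamma>: "\<gamma> > 0"
    and mgf: "\<And>t. \<bar>t\<bar> \<le> 2 * L / \<beta> \<Longrightarrow>
      (\<integral>\<^sup>+ z. ennreal (exp (t * z)) \<partial>N) \<le> ennreal (exp ((1 + \<epsilon>) * t\<^sup>2 * \<gamma> * va))"
  shows "(\<integral>\<^sup>+ z. ennreal (log_partition_gap (a + z)) \<partial>N)
           \<le> ennreal (log_partition_gap a + exp (\<gamma> * (2 * L\<^sup>2 / \<beta>)) * (1 + \<epsilon>) / 2 * \<gamma> * tilt_var a)"
proof -
  interpret N: prob_space N by fact
  note int_shift = integrable_log_partition_shift[OF N(1-3)]
  have int: "integrable N (\<lambda>z. log_partition_gap (a + z))"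
    unfolding log_partition_gap_def using int_shift N(3) by simp
  have "(\<integral>z. log_partition_gap (a + z) \<partial>N)
      = (\<integral>z. log_partition (a + z) - (log_partition 0 + a * tilt_mean 0) - z * tilt_mean 0 \<partial>N)"
    unfolding log_partition_gap_def by (simp add: algebra_simps)
  also have "\<dots> = (\<integral>z. log_partition (a + z) \<partial>N) - (log_partition 0 + a * tilt_mean 0)
      - (\<integral>z. z \<partial>N) * tilt_mean 0"
    using int_shift N(3) by (simp add: Bochner_Integration.integral_diff N.prob_space)
  also have "\<dots> \<le> log_partition_gap a + exp (\<gamma> * (2 * L\<^sup>2 / \<beta>)) * (1 + \<epsilon>) / 2 * \<gamma> * tilt_var a"
    using integral_log_partition_shift_le[OF N L va \<epsilon> \<gamma> mgf] N(4)
    unfolding log_partition_gap_def by simp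
  finally show ?thesis
    using int log_partition_gap_nonneg by (subst nn_integral_eq_integral) (auto intro: ennreal_leI)
qed

lemma integrable_mult_tilt_mean:
  assumes "prob_space D" "sets D = sets borel" "integrable D (\<lambda>x. x)"
  shows "integrable D (\<lambda>x. x * tilt_mean x)"
proof -
  interpret D: prob_space D by fact
  show ?thesis
  proof (rule D.integrable_affine_growth[OF assms(3)])
    show "(\<lambda>x. x * tilt_mean x) \<in> borel_measurable D"
      unfolding measurable_cong_sets[OF assms(2) refl] by simp
    show "\<bar>x * tilt_mean x\<bar> \<le> 0 + (\<Sum>j\<in>J. \<bar>e j\<bar>) * \<bar>x\<bar>" for x
      using abs_tilt_mean_le[of x] by (simp add: abs_mult mult.commute mult_left_mono)
  qed
qed

lemma integrable_tilt_var:
  assumes "prob_space D" "sets D = sets borel"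
    and "\<And>j k. j \<in> J \<Longrightarrow> k \<in> J \<Longrightarrow> \<bar>e j - e k\<bar> \<le> L"
  shows "integrable D tilt_var"
proof -
  interpret D: prob_space D by fact
  show ?thesis
    using tilt_var_nonneg tilt_var_le[OF assms(3)]
    by (intro D.integrable_const_bound[where B = "L\<^sup>2"])
      (auto simp: measurable_cong_sets[OF assms(2) refl])
qed

lemma integrable_log_partition_gap_scaled:
  assumes "prob_space D" "sets D = sets borel" "integrable D (\<lambda>x. x)"
  shows "integrable D (\<lambda>x. log_partition_gap (c * x))"
proof -
  interpret D: prob_space D by fact
  show ?thesis
  proof (rule D.integrable_affine_growth[OF assms(3)])
    show "\<bar>log_partition_gap (c * x)\<bar> \<le> 0 + 2 * (\<Sum>j\<in>J. \<bar>e j\<bar>) * \<bar>c\<bar> * \<bar>x\<bar>" for x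
      using abs_log_partition_gap_le[of "c * x"] by (simp add: abs_mult mult.assoc)
  qed (simp add: measurable_cong_sets[OF assms(2) refl])
qed

lemma AE_nn_integral_log_partition_gap_shift_le:
  fixes D :: "real measure" and K :: "real \<Rightarrow> real measure" and v :: "real \<Rightarrow> real"
    and t0 :: ereal and L \<gamma> \<epsilon> :: real
  assumes sets_D: "sets D = sets borel"
    and L: "\<And>j k. j \<in> J \<Longrightarrow> k \<in> J \<Longrightarrow> \<bar>e j - e k\<bar> \<le> L" and t0: "ereal (2 * L / \<beta>) \<le> t0"
    and v: "\<And>a. 0 \<le> v a" "\<And>a. 4 * v a \<le> \<beta>" and \<epsilon>: "0 < \<epsilon>" "\<epsilon> \<le> 1" and \<gamma>: "\<gamma> > 0"
    and K: "K \<in> borel \<rightarrow>\<^sub>M prob_algebra borel"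
      "(\<integral>\<^sup>+ a. \<integral>\<^sup>+ z. ennreal \<bar>z\<bar> \<partial>K a \<partial>D) < \<infinity>"
      "AE a in D. (\<integral>z. z \<partial>K a) = 0"
    and mgf: "\<And>t a. ereal \<bar>t\<bar> \<le> t0 \<Longrightarrow> a \<in> dist_support D \<Longrightarrow>
      (\<integral>\<^sup>+ z. ennreal (exp (t * z)) \<partial>K a) \<le> ennreal (exp ((1 + \<epsilon>) * t\<^sup>2 * \<gamma> * v a))"
  shows "AE a in D. (\<integral>\<^sup>+ z. ennreal (log_partition_gap (a + z)) \<partial>K a)
    \<le> ennreal (log_partition_gap a + exp (\<gamma> * (2 * L\<^sup>2 / \<beta>)) * (1 + \<epsilon>) / 2 * \<gamma> * tilt_var a)"
proof -
  have "(\<lambda>a. \<integral>\<^sup>+ z. ennreal \<bar>z\<bar> \<partial>K a) \<in> borel_measurable D"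
    using measurable_prob_algebraD[OF K(1)] unfolding measurable_cong_sets[OF sets_D refl]
    by (rule measurable_compose[OF _ nn_integral_measurable_subprob_algebra]) simp
  then have "AE a in D. (\<integral>\<^sup>+ z. ennreal \<bar>z\<bar> \<partial>K a) \<noteq> \<infinity>"
    using K(2) by (intro nn_integral_PInf_AE) auto
  then show ?thesis using K(3) AE_in_dist_support[OF sets_D]
  proof eventually_elim
    case (elim a)
    have "K a \<in> space (prob_algebra borel)" using measurable_space[OF K(1)] by simp
    then have N: "prob_space (K a)" "sets (K a) = sets borel" by (auto simp: space_prob_algebra)
    have int_id: "integrable (K a) (\<lambda>z. z)"
      using elim(1) by (intro integrableI_bounded)
        (simp_all add: measurable_cong_sets[OF N(2) refl] less_top)
    have mgf_a: "(\<integral>\<^sup>+ z. ennreal (exp (t * z)) \<partial>K a) \<le> ennreal (exp ((1 + \<epsilon>) * t\<^sup>2 * \<gamma> * v a))"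
      if "\<bar>t\<bar> \<le> 2 * L / \<beta>" for t
      using mgf elim(3) that t0 by (meson ereal_less_eq(3) order_trans)
    show ?case
      by (rule nn_integral_log_partition_gap_shift_le[OF N int_id elim(2) L v(1) v(2) \<epsilon> \<gamma> mgf_a])
  qed
qed

text \<open>\<open>(1 + \<gamma>) * x\<close> has the law of \<open>x + \<zeta>\<close> with \<open>\<zeta>\<close> drawn from \<open>K x\<close>, so its expectation
  is controlled by the moment generating function of \<open>K x\<close>. The centred \<open>log_partition_gap\<close>
  is used instead of \<open>log_partition\<close> because it is nonnegative.\<close>
lemma integral_log_partition_gap_scaled_le:
  fixes D :: "real measure" and K :: "real \<Rightarrow> real measure" and v :: "real \<Rightarrow> real"
    and t0 :: ereal and L \<gamma> \<epsilon> :: real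
  assumes D: "prob_space D" "sets D = sets borel" "integrable D (\<lambda>x. x)"
    and L: "\<And>j k. j \<in> J \<Longrightarrow> k \<in> J \<Longrightarrow> \<bar>e j - e k\<bar> \<le> L" and t0: "ereal (2 * L / \<beta>) \<le> t0"
    and v: "\<And>a. 0 \<le> v a" "\<And>a. 4 * v a \<le> \<beta>" and \<epsilon>: "0 < \<epsilon>" "\<epsilon> \<le> 1" and \<gamma>: "\<gamma> > 0"
    and K: "K \<in> borel \<rightarrow>\<^sub>M prob_algebra borel"
      "(\<integral>\<^sup>+ a. \<integral>\<^sup>+ z. ennreal \<bar>z\<bar> \<partial>K a \<partial>D) < \<infinity>"
      "AE a in D. (\<integral>z. z \<partial>K a) = 0"
      "D \<bind> (\<lambda>a. distr (K a) borel (\<lambda>z. a + z)) = distr D borel (\<lambda>x. (1 + \<gamma>) * x)"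
    and mgf: "\<And>t a. ereal \<bar>t\<bar> \<le> t0 \<Longrightarrow> a \<in> dist_support D \<Longrightarrow>
      (\<integral>\<^sup>+ z. ennreal (exp (t * z)) \<partial>K a) \<le> ennreal (exp ((1 + \<epsilon>) * t\<^sup>2 * \<gamma> * v a))"
  shows "(\<integral>x. log_partition_gap ((1 + \<gamma>) * x) \<partial>D)
    \<le> (\<integral>x. log_partition_gap x \<partial>D) + exp (\<gamma> * (2 * L\<^sup>2 / \<beta>)) * (1 + \<epsilon>) / 2 * \<gamma> * (\<integral>x. tilt_var x \<partial>D)"
proof -
  define \<kappa> where "\<kappa> = exp (\<gamma> * (2 * L\<^sup>2 / \<beta>)) * (1 + \<epsilon>) / 2"
  have \<kappa>: "\<kappa> \<ge> 0" using \<epsilon> by (simp add: \<kappa>_def)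
  note int_gap_scaled = integrable_log_partition_gap_scaled[OF D]
  have int_gap: "integrable D log_partition_gap" using int_gap_scaled[of 1] by simp
  have int_var: "integrable D tilt_var" by (rule integrable_tilt_var[OF D(1,2) L])
  have "ennreal (\<integral>x. log_partition_gap ((1 + \<gamma>) * x) \<partial>D)
      = (\<integral>\<^sup>+ x. ennreal (log_partition_gap ((1 + \<gamma>) * x)) \<partial>D)"
    using int_gap_scaled log_partition_gap_nonneg by (intro nn_integral_eq_integral[symmetric]) auto
  also have "\<dots> \<le> (\<integral>\<^sup>+ a. ennreal (log_partition_gap a + \<kappa> * \<gamma> * tilt_var a) \<partial>D)"
    using AE_nn_integral_log_partition_gap_shift_le[OF D(2) L t0 v \<epsilon> \<gamma> K(1-3) mgf]
    unfolding \<kappa>_def by (intro nn_integral_scaled_le_of_kernel[OF D(2) K(1) K(4)]) simp_all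
  also have "\<dots> = ennreal (\<integral>a. log_partition_gap a + \<kappa> * \<gamma> * tilt_var a \<partial>D)"
    using int_gap int_var log_partition_gap_nonneg tilt_var_nonneg \<kappa> \<gamma>
    by (intro nn_integral_eq_integral) auto
  finally show ?thesis
    using int_gap int_var log_partition_gap_nonneg tilt_var_nonneg \<kappa> \<gamma> unfolding \<kappa>_def[symmetric]
    by (subst (asm) ennreal_le_iff) (auto intro!: integral_nonneg_AE)
qed

text \<open>The tangent of \<open>log_partition\<close> at \<open>x\<close> bounds \<open>\<gamma> * x * tilt_mean x\<close> by the increment
  of \<open>log_partition\<close> from \<open>x\<close> to \<open>(1 + \<gamma>) * x\<close>.\<close>
lemma integral_mult_tilt_mean_le_kernel:
  fixes D :: "real measure" and K :: "real \<Rightarrow> real measure" and v :: "real \<Rightarrow> real"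
    and t0 :: ereal and L \<gamma> \<epsilon> :: real
  assumes D: "prob_space D" "sets D = sets borel" "integrable D (\<lambda>x. x)" "(\<integral>x. x \<partial>D) = 0"
    and L: "\<And>j k. j \<in> J \<Longrightarrow> k \<in> J \<Longrightarrow> \<bar>e j - e k\<bar> \<le> L" and t0: "ereal (2 * L / \<beta>) \<le> t0"
    and v: "\<And>a. 0 \<le> v a" "\<And>a. 4 * v a \<le> \<beta>" and \<epsilon>: "0 < \<epsilon>" "\<epsilon> \<le> 1" and \<gamma>: "\<gamma> > 0"
    and K: "K \<in> borel \<rightarrow>\<^sub>M prob_algebra borel"
      "(\<integral>\<^sup>+ a. \<integral>\<^sup>+ z. ennreal \<bar>z\<bar> \<partial>K a \<partial>D) < \<infinity>"
      "AE a in D. (\<integral>z. z \<partial>K a) = 0"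
      "D \<bind> (\<lambda>a. distr (K a) borel (\<lambda>z. a + z)) = distr D borel (\<lambda>x. (1 + \<gamma>) * x)"
    and mgf: "\<And>t a. ereal \<bar>t\<bar> \<le> t0 \<Longrightarrow> a \<in> dist_support D \<Longrightarrow>
      (\<integral>\<^sup>+ z. ennreal (exp (t * z)) \<partial>K a) \<le> ennreal (exp ((1 + \<epsilon>) * t\<^sup>2 * \<gamma> * v a))"
  shows "(\<integral>x. x * tilt_mean x \<partial>D) \<le> exp (\<gamma> * (2 * L\<^sup>2 / \<beta>)) * (1 + \<epsilon>) / 2 * (\<integral>x. tilt_var x \<partial>D)"
proof -
  note int_gap_scaled = integrable_log_partition_gap_scaled[OF D(1-3)]
  have int_gap: "integrable D log_partition_gap" using int_gap_scaled[of 1] by simp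
  have tangent: "\<gamma> * (x * tilt_mean x)
      \<le> log_partition_gap ((1 + \<gamma>) * x) - log_partition_gap x + \<gamma> * tilt_mean 0 * x" for x
    using log_partition_ge_tangent[of "(1 + \<gamma>) * x" x] unfolding log_partition_gap_def
    by (simp add: algebra_simps)
  have "\<gamma> * (\<integral>x. x * tilt_mean x \<partial>D) = (\<integral>x. \<gamma> * (x * tilt_mean x) \<partial>D)" by simp
  also have "\<dots> \<le> (\<integral>x. log_partition_gap ((1 + \<gamma>) * x) - log_partition_gap x + \<gamma> * tilt_mean 0 * x \<partial>D)"
    using integrable_mult_tilt_mean[OF D(1-3)] int_gap_scaled int_gap D(3) tangent
    by (intro integral_mono) auto
  also have "\<dots> = (\<integral>x. log_partition_gap ((1 + \<gamma>) * x) \<partial>D) - (\<integral>x. log_partition_gap x \<partial>D)"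
    using int_gap_scaled int_gap D(3,4) by simp
  also have "\<dots> \<le> exp (\<gamma> * (2 * L\<^sup>2 / \<beta>)) * (1 + \<epsilon>) / 2 * \<gamma> * (\<integral>x. tilt_var x \<partial>D)"
    using integral_log_partition_gap_scaled_le[OF D(1-3) L t0 v \<epsilon> \<gamma> K mgf] by linarith
  finally show ?thesis using \<gamma> by (simp add: ac_simps)
qed

lemma integral_mult_tilt_mean_le_half_var:
  fixes D :: "real measure" and v :: "real \<Rightarrow> real" and t0 :: ereal and L :: real
  assumes D: "prob_space D" "sets D = sets borel" "integrable D (\<lambda>x. x)" "(\<integral>x. x \<partial>D) = 0"
    and N: "assumption_N D t0 v"
    and L: "\<And>j k. j \<in> J \<Longrightarrow> k \<in> J \<Longrightarrow> \<bar>e j - e k\<bar> \<le> L"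
    and v_le: "4 * (SUP a. \<bar>v a\<bar>) \<le> \<beta>" and t0: "ereal (2 * L / \<beta>) \<le> t0"
  shows "(\<integral>x. x * tilt_mean x \<partial>D) \<le> (\<integral>x. tilt_var x \<partial>D) / 2"
proof -
  from N obtain \<gamma>0 K where \<gamma>0: "\<gamma>0 > 0"
    and K: "\<And>\<gamma>. \<gamma> \<in> {0<..<\<gamma>0} \<Longrightarrow>
      K \<gamma> \<in> borel \<rightarrow>\<^sub>M prob_algebra borel \<and>
      (\<integral>\<^sup>+ a. \<integral>\<^sup>+ z. ennreal \<bar>z\<bar> \<partial>K \<gamma> a \<partial>D) < \<infinity> \<and>
      (AE a in D. (\<integral>z. z \<partial>K \<gamma> a) = 0) \<and>
      D \<bind> (\<lambda>a. distr (K \<gamma> a) borel (\<lambda>z. a + z)) = distr D borel (\<lambda>x. (1 + \<gamma>) * x)"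
    and mgf: "\<forall>\<epsilon>>0. \<exists>\<delta>>0. \<forall>\<gamma>\<in>{0<..<min \<delta> \<gamma>0}. \<forall>t a.
      ereal \<bar>t\<bar> \<le> t0 \<longrightarrow> a \<in> dist_support D \<longrightarrow>
      (\<integral>\<^sup>+ z. ennreal (exp (t * z)) \<partial>K \<gamma> a) \<le> ennreal (exp ((1 + \<epsilon>) * t\<^sup>2 * \<gamma> * v a))"
    and v_nonneg: "\<And>a. v a \<ge> 0" and "bounded (range v)"
    unfolding assumption_N_def by blast
  then have "bdd_above (range (\<lambda>a. \<bar>v a\<bar>))"
    by (auto simp: bounded_iff intro: bdd_aboveI2)
  then have v: "4 * v a \<le> \<beta>" for a
    using cSUP_upper[of a UNIV "\<lambda>a. \<bar>v a\<bar>"] v_le by simp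
  define C where "C = 2 * L\<^sup>2 / \<beta>"
  have C: "C \<ge> 0" unfolding C_def using \<beta>_pos by simp
  have var: "(\<integral>x. tilt_var x \<partial>D) \<ge> 0" by (intro integral_nonneg_AE AE_I2 tilt_var_nonneg)
  show ?thesis
  proof (rule le_of_le_one_plus_eps_squared)
    fix \<epsilon> :: real assume \<epsilon>: "0 < \<epsilon>" "\<epsilon> \<le> 1"
    then obtain \<delta> where \<delta>: "\<delta> > 0" and mgf_\<delta>: "\<forall>\<gamma>\<in>{0<..<min \<delta> \<gamma>0}. \<forall>t a.
      ereal \<bar>t\<bar> \<le> t0 \<longrightarrow> a \<in> dist_support D \<longrightarrow>
      (\<integral>\<^sup>+ z. ennreal (exp (t * z)) \<partial>K \<gamma> a) \<le> ennreal (exp ((1 + \<epsilon>) * t\<^sup>2 * \<gamma> * v a))"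
      using mgf by blast
    obtain \<gamma> where \<gamma>: "\<gamma> \<in> {0<..<min \<delta> \<gamma>0}" and exp_\<gamma>: "exp (\<gamma> * C) \<le> 1 + \<epsilon>"
      using exists_exp_mult_le[OF C _ \<epsilon>(1), of "min \<delta> \<gamma>0"] \<delta> \<gamma>0 by auto
    have "(\<integral>x. x * tilt_mean x \<partial>D) \<le> exp (\<gamma> * C) * (1 + \<epsilon>) / 2 * (\<integral>x. tilt_var x \<partial>D)"
    proof -
      have "\<gamma> \<in> {0<..<\<gamma>0}" using \<gamma> by simp
      note K\<gamma> = K[OF this, THEN conjunct1] K[OF this, THEN conjunct2, THEN conjunct1]
        K[OF this, THEN conjunct2, THEN conjunct2, THEN conjunct1]
        K[OF this, THEN conjunct2, THEN conjunct2, THEN conjunct2]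
      have "\<And>t a. ereal \<bar>t\<bar> \<le> t0 \<Longrightarrow> a \<in> dist_support D \<Longrightarrow>
          (\<integral>\<^sup>+ z. ennreal (exp (t * z)) \<partial>K \<gamma> a) \<le> ennreal (exp ((1 + \<epsilon>) * t\<^sup>2 * \<gamma> * v a))"
        using mgf_\<delta> \<gamma> by blast
      from integral_mult_tilt_mean_le_kernel[OF D L t0 v_nonneg v \<epsilon> _ K\<gamma> this] \<gamma>
      show ?thesis unfolding C_def by simp
    qed
    also have "\<dots> \<le> (1 + \<epsilon>) * (1 + \<epsilon>) * ((\<integral>x. tilt_var x \<partial>D) / 2)"
      using exp_\<gamma> \<epsilon> var by (simp add: mult_right_mono)
    finally show "(\<integral>x. x * tilt_mean x \<partial>D) \<le> (1 + \<epsilon>) * (1 + \<epsilon>) * ((\<integral>x. tilt_var x \<partial>D) / 2)" .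
  qed
qed

end

section \<open>Risk of the exponentially weighted aggregate\<close>

locale ewa_regression =
  fixes I :: "'i set" and J :: "'j set" and d :: "'j \<Rightarrow> 'i \<Rightarrow> real" and \<beta> :: real
  assumes finite_I: "finite I" and finite_J: "finite J" and J_ne: "J \<noteq> {}" and \<beta>_pos: "\<beta> > 0"
begin

text \<open>With \<open>Y i = f (Z i) + \<xi> i\<close> and \<open>d j i = f\<^sub>j (Z i) - f (Z i)\<close>, \<open>cost \<xi> j\<close> is the paper's
  \<open>\<parallel>Y - f\<^sub>j\<parallel>\<^sub>2\<^sup>2\<close> and \<open>agg \<xi> i\<close> is the value of the aggregate at \<open>Z i\<close> minus \<open>f (Z i)\<close>.\<close>
definition cost :: "('i \<Rightarrow> real) \<Rightarrow> 'j \<Rightarrow> real" where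
  "cost \<xi> j = (\<Sum>i\<in>I. (\<xi> i - d j i)\<^sup>2)"

definition weight :: "('i \<Rightarrow> real) \<Rightarrow> 'j \<Rightarrow> real" where
  "weight \<xi> = gibbs_weight J \<beta> (cost \<xi>)"

definition agg :: "('i \<Rightarrow> real) \<Rightarrow> 'i \<Rightarrow> real" where
  "agg \<xi> i = (\<Sum>j\<in>J. weight \<xi> j * d j i)"

definition spread :: "('i \<Rightarrow> real) \<Rightarrow> 'i \<Rightarrow> real" where
  "spread \<xi> i = (\<Sum>j\<in>J. weight \<xi> j * (d j i - agg \<xi> i)\<^sup>2)"

text \<open>As a function of the single coordinate \<open>\<xi> i\<close>, the weights are an exponential tilt
  of these prior weights, which do not depend on \<open>\<xi> i\<close>.\<close>
definition coord_prior :: "('i \<Rightarrow> real) \<Rightarrow> 'i \<Rightarrow> 'j \<Rightarrow> real" where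
  "coord_prior \<xi> i j = exp (- ((\<Sum>l\<in>I - {i}. (\<xi> l - d j l)\<^sup>2) + (d j i)\<^sup>2) / \<beta>)"

lemma sum_weight: "(\<Sum>j\<in>J. weight \<xi> j) = 1"
  unfolding weight_def by (rule sum_gibbs_weight[OF finite_J J_ne])

lemma coord_prior_upd: "coord_prior (\<xi>(i := x)) i = coord_prior \<xi> i"
  unfolding coord_prior_def by (intro ext arg_cong[where f = exp] arg_cong2[where f = "(/)"]
      arg_cong[where f = uminus] arg_cong2[where f = "(+)"] sum.cong) auto

lemma exponential_tilt_coord: "exponential_tilt J (coord_prior \<xi> i) \<beta>"
  by unfold_locales (use finite_J J_ne \<beta>_pos in \<open>auto simp: coord_prior_def\<close>)

lemma weight_eq_tilt:
  assumes "i \<in> I"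
  shows "weight \<xi> j = exponential_tilt.tilt J (coord_prior \<xi> i) (\<lambda>j. d j i) \<beta> j (\<xi> i)"
proof -
  have split: "- cost \<xi> k / \<beta>
      = - (\<xi> i)\<^sup>2 / \<beta> + (- ((\<Sum>l\<in>I - {i}. (\<xi> l - d k l)\<^sup>2) + (d k i)\<^sup>2) / \<beta> + 2 * \<xi> i * d k i / \<beta>)"
    for k
    unfolding cost_def using finite_I assms \<beta>_pos
    by (simp add: sum.remove field_simps power2_diff)
  have "exp (- cost \<xi> k / \<beta>)
      = exp (- (\<xi> i)\<^sup>2 / \<beta>) * (coord_prior \<xi> i k * exp (2 * \<xi> i * d k i / \<beta>))" for k
    unfolding split coord_prior_def by (simp only: exp_add)
  then show ?thesis
    unfolding weight_def gibbs_weight_def exponential_tilt.tilt_def[OF exponential_tilt_coord]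
      exponential_tilt.partition_def[OF exponential_tilt_coord]
    by (simp add: sum_distrib_left[symmetric])
qed

lemma agg_eq_tilt_mean:
  "i \<in> I \<Longrightarrow> agg \<xi> i = exponential_tilt.tilt_mean J (coord_prior \<xi> i) (\<lambda>j. d j i) \<beta> (\<xi> i)"
  unfolding agg_def exponential_tilt.tilt_mean_def[OF exponential_tilt_coord]
  by (simp add: weight_eq_tilt)

lemma spread_eq_tilt_var:
  "i \<in> I \<Longrightarrow> spread \<xi> i = exponential_tilt.tilt_var J (coord_prior \<xi> i) (\<lambda>j. d j i) \<beta> (\<xi> i)"
  unfolding spread_def exponential_tilt.tilt_var_def[OF exponential_tilt_coord]
  by (simp add: weight_eq_tilt agg_eq_tilt_mean)

lemma sum_sq_agg_le:
  assumes k: "k \<in> J"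
  shows "(\<Sum>i\<in>I. (agg \<xi> i)\<^sup>2)
    \<le> (\<Sum>i\<in>I. (d k i)\<^sup>2) + \<beta> * ln (card J) - 2 * (\<Sum>i\<in>I. \<xi> i * d k i)
      + (\<Sum>i\<in>I. 2 * \<xi> i * agg \<xi> i - spread \<xi> i)"
proof -
  have "(\<Sum>i\<in>I. (agg \<xi> i)\<^sup>2) = (\<Sum>j\<in>J. weight \<xi> j * cost \<xi> j) - (\<Sum>i\<in>I. (\<xi> i)\<^sup>2)
      + (\<Sum>i\<in>I. 2 * \<xi> i * agg \<xi> i - spread \<xi> i)"
    unfolding agg_def spread_def cost_def by (rule weighted_mean_sq_decomposition[OF sum_weight])
  moreover have "(\<Sum>j\<in>J. weight \<xi> j * cost \<xi> j) \<le> cost \<xi> k + \<beta> * ln (card J)"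
    unfolding weight_def by (rule gibbs_weighted_cost_le[OF finite_J k \<beta>_pos])
  moreover have "cost \<xi> k = (\<Sum>i\<in>I. (\<xi> i)\<^sup>2) - 2 * (\<Sum>i\<in>I. \<xi> i * d k i) + (\<Sum>i\<in>I. (d k i)\<^sup>2)"
  proof -
    have "cost \<xi> k = (\<Sum>i\<in>I. (\<xi> i)\<^sup>2 - 2 * (\<xi> i * d k i) + (d k i)\<^sup>2)"
      unfolding cost_def by (intro sum.cong refl) (simp add: power2_diff)
    then show ?thesis by (simp add: sum.distrib sum_subtractf sum_distrib_left)
  qed
  ultimately show ?thesis by linarith
qed

end

locale ewa_noise = ewa_regression I J d \<beta>
  for I :: "'i set" and J :: "'j set" and d :: "'j \<Rightarrow> 'i \<Rightarrow> real" and \<beta> :: real +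
  fixes D :: "real measure" and t0 :: ereal and v :: "real \<Rightarrow> real" and L :: real
  assumes prob_space_D: "prob_space D" and sets_D: "sets D = sets borel"
    and integrable_D: "integrable D (\<lambda>x. x)" and centred_D: "(\<integral>x. x \<partial>D) = 0"
    and assumption_N: "assumption_N D t0 v"
    and v_le: "4 * (SUP a. \<bar>v a\<bar>) \<le> \<beta>" and t0: "ereal (2 * L / \<beta>) \<le> t0"
    and L: "\<And>i j k. i \<in> I \<Longrightarrow> j \<in> J \<Longrightarrow> k \<in> J \<Longrightarrow> \<bar>d j i - d k i\<bar> \<le> L"
begin

abbreviation noise_law :: "('i \<Rightarrow> real) measure" where
  "noise_law \<equiv> PiM I (\<lambda>_. D)"

sublocale P: prob_space noise_law
  using prob_space_D by (intro prob_space_PiM) auto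

lemma measurable_component_D: "i \<in> I \<Longrightarrow> (\<lambda>\<xi>. \<xi> i) \<in> measurable noise_law D"
  by (rule measurable_component_singleton)

lemma borel_measurable_component[measurable]:
  assumes "i \<in> I"
  shows "(\<lambda>\<xi>. \<xi> i) \<in> borel_measurable noise_law"
  using measurable_component_D[OF assms] unfolding measurable_cong_sets[OF refl sets_D] .

lemma borel_measurable_weight[measurable]: "(\<lambda>\<xi>. weight \<xi> j) \<in> borel_measurable noise_law"
  unfolding weight_def gibbs_weight_def cost_def by measurable

lemma borel_measurable_agg[measurable]: "(\<lambda>\<xi>. agg \<xi> i) \<in> borel_measurable noise_law"
  unfolding agg_def by measurable

lemma borel_measurable_spread[measurable]: "(\<lambda>\<xi>. spread \<xi> i) \<in> borel_measurable noise_law"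
  unfolding spread_def by measurable

lemma distr_component: "i \<in> I \<Longrightarrow> distr noise_law D (\<lambda>\<xi>. \<xi> i) = D"
  by (rule distr_PiM_component[OF prob_space_D])

lemma integrable_component:
  assumes "i \<in> I"
  shows "integrable noise_law (\<lambda>\<xi>. \<xi> i)"
  using integrable_distr_eq[OF measurable_component_D[OF assms] measurable_ident_sets[OF sets_D]]
    integrable_D unfolding distr_component[OF assms] by simp

lemma integral_component:
  assumes "i \<in> I"
  shows "(\<integral>\<xi>. \<xi> i \<partial>noise_law) = 0"
  using integral_distr[OF measurable_component_D[OF assms] measurable_ident_sets[OF sets_D]]
    centred_D unfolding distr_component[OF assms] by simp

lemma abs_agg_le: "i \<in> I \<Longrightarrow> \<bar>agg \<xi> i\<bar> \<le> (\<Sum>j\<in>J. \<bar>d j i\<bar>)"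
  unfolding agg_eq_tilt_mean by (rule exponential_tilt.abs_tilt_mean_le[OF exponential_tilt_coord])

lemma spread_bounds:
  assumes "i \<in> I"
  shows "0 \<le> spread \<xi> i \<and> spread \<xi> i \<le> L\<^sup>2"
proof -
  interpret tilt: exponential_tilt J "coord_prior \<xi> i" "\<lambda>j. d j i" \<beta>
    by (rule exponential_tilt_coord)
  show ?thesis
    unfolding spread_eq_tilt_var[OF assms] using tilt.tilt_var_nonneg tilt.tilt_var_le L[OF assms]
    by blast
qed

lemma integrable_coord_term:
  assumes i: "i \<in> I"
  shows "integrable noise_law (\<lambda>\<xi>. 2 * \<xi> i * agg \<xi> i - spread \<xi> i)"
proof (rule P.integrable_affine_growth[OF integrable_component[OF i]])
  show "(\<lambda>\<xi>. 2 * \<xi> i * agg \<xi> i - spread \<xi> i) \<in> borel_measurable noise_law" using i by measurable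
  fix \<xi>
  have "\<bar>2 * \<xi> i * agg \<xi> i\<bar> \<le> 2 * (\<Sum>j\<in>J. \<bar>d j i\<bar>) * \<bar>\<xi> i\<bar>"
    using abs_agg_le[OF i, of \<xi>] by (simp add: abs_mult mult_left_mono mult.commute mult.left_commute)
  then show "\<bar>2 * \<xi> i * agg \<xi> i - spread \<xi> i\<bar> \<le> L\<^sup>2 + 2 * (\<Sum>j\<in>J. \<bar>d j i\<bar>) * \<bar>\<xi> i\<bar>"
    using spread_bounds[OF i, of \<xi>] by linarith
qed

text \<open>Integrating out the coordinate \<open>\<xi> i\<close> first, this is Stein's bound for one exponential
  tilt per value of the other coordinates.\<close>
lemma integral_coord_term_nonpos:
  assumes i: "i \<in> I"
  shows "(\<integral>\<xi>. 2 * \<xi> i * agg \<xi> i - spread \<xi> i \<partial>noise_law) \<le> 0"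
proof -
  define T where "T \<xi> = 2 * \<xi> i * agg \<xi> i - spread \<xi> i" for \<xi>
  interpret product_sigma_finite "\<lambda>_::'i. D"
    by (simp add: product_sigma_finite_def prob_space_imp_sigma_finite[OF prob_space_D])
  have inner: "(\<integral>x. T (y(i := x)) \<partial>D) \<le> 0" for y
  proof -
    interpret tilt: exponential_tilt J "coord_prior y i" "\<lambda>j. d j i" \<beta>
      by (rule exponential_tilt_coord)
    have "T (y(i := x)) = 2 * (x * tilt.tilt_mean x) - tilt.tilt_var x" for x
      unfolding T_def using i by (simp add: agg_eq_tilt_mean spread_eq_tilt_var coord_prior_upd)
    then have "(\<integral>x. T (y(i := x)) \<partial>D)
        = 2 * (\<integral>x. x * tilt.tilt_mean x \<partial>D) - (\<integral>x. tilt.tilt_var x \<partial>D)"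
      using tilt.integrable_mult_tilt_mean[OF prob_space_D sets_D integrable_D]
        tilt.integrable_tilt_var[OF prob_space_D sets_D L[OF i]] by simp
    also have "\<dots> \<le> 0"
      using tilt.integral_mult_tilt_mean_le_half_var[OF prob_space_D sets_D integrable_D centred_D
          assumption_N L[OF i] v_le t0] by simp
    finally show ?thesis .
  qed
  have "insert i (I - {i}) = I" using i by auto
  then have "(\<integral>\<xi>. T \<xi> \<partial>noise_law) = (\<integral>y. (\<integral>x. T (y(i := x)) \<partial>D) \<partial>PiM (I - {i}) (\<lambda>_. D))"
    using product_integral_insert[of "I - {i}" i T] integrable_coord_term[OF i] finite_I
    unfolding T_def by simp
  also have "\<dots> \<le> 0"
    using integral_nonneg_AE[of "\<lambda>y. - (\<integral>x. T (y(i := x)) \<partial>D)" "PiM (I - {i}) (\<lambda>_. D)"] inner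
    by simp
  finally show ?thesis unfolding T_def .
qed

lemma integral_sum_sq_agg_le:
  assumes k: "k \<in> J"
  shows "(\<integral>\<xi>. (\<Sum>i\<in>I. (agg \<xi> i)\<^sup>2) \<partial>noise_law) \<le> (\<Sum>i\<in>I. (d k i)\<^sup>2) + \<beta> * ln (card J)"
proof -
  define c where "c = (\<Sum>i\<in>I. (d k i)\<^sup>2) + \<beta> * ln (card J)"
  define cross where "cross \<xi> = (\<Sum>i\<in>I. \<xi> i * d k i)" for \<xi> :: "'i \<Rightarrow> real"
  define terms where "terms \<xi> = (\<Sum>i\<in>I. 2 * \<xi> i * agg \<xi> i - spread \<xi> i)" for \<xi>
  have int_cross: "integrable noise_law cross" and integral_cross: "(\<integral>\<xi>. cross \<xi> \<partial>noise_law) = 0"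
    unfolding cross_def using integrable_component integral_component by auto
  have int_terms: "integrable noise_law terms"
    unfolding terms_def using integrable_coord_term by auto
  have integral_terms: "(\<integral>\<xi>. terms \<xi> \<partial>noise_law) \<le> 0"
    unfolding terms_def using integrable_coord_term integral_coord_term_nonpos
    by (simp add: sum_nonpos)
  have int_sq: "integrable noise_law (\<lambda>\<xi>. \<Sum>i\<in>I. (agg \<xi> i)\<^sup>2)"
  proof (rule P.integrable_const_bound[where B = "\<Sum>i\<in>I. (\<Sum>j\<in>J. \<bar>d j i\<bar>)\<^sup>2"])
    show "AE \<xi> in noise_law. norm (\<Sum>i\<in>I. (agg \<xi> i)\<^sup>2) \<le> (\<Sum>i\<in>I. (\<Sum>j\<in>J. \<bar>d j i\<bar>)\<^sup>2)"
      using abs_agg_le by (auto simp: sum_nonneg abs_le_square_iff[symmetric] intro!: sum_mono)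
  qed measurable
  have "(\<integral>\<xi>. (\<Sum>i\<in>I. (agg \<xi> i)\<^sup>2) \<partial>noise_law) \<le> (\<integral>\<xi>. c - 2 * cross \<xi> + terms \<xi> \<partial>noise_law)"
    using int_cross int_terms sum_sq_agg_le[OF k] unfolding c_def cross_def terms_def
    by (intro integral_mono[OF int_sq]) auto
  also have "\<dots> = c + (\<integral>\<xi>. terms \<xi> \<partial>noise_law)"
    using int_cross int_terms integral_cross by (simp add: P.prob_space)
  also have "\<dots> \<le> c" using integral_terms by simp
  finally show ?thesis unfolding c_def .
qed

end

lemma abs_diff_le_Max_abs_diff:
  fixes F :: "'j \<Rightarrow> 'i \<Rightarrow> real"
  assumes "finite I" "finite J" "i \<in> I" "j \<in> J" "k \<in> J"
  shows "\<bar>F j i - F k i\<bar> \<le> Max {\<bar>F j i - F k i\<bar> | i j k. i \<in> I \<and> j \<in> J \<and> k \<in> J}"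
proof (rule Max_ge)
  have "{\<bar>F j i - F k i\<bar> | i j k. i \<in> I \<and> j \<in> J \<and> k \<in> J}
      \<subseteq> (\<lambda>(i, j, k). \<bar>F j i - F k i\<bar>) ` (I \<times> J \<times> J)"
    by (force intro: image_eqI[where x = "(i, j, k)" for i j k])
  then show "finite {\<bar>F j i - F k i\<bar> | i j k. i \<in> I \<and> j \<in> J \<and> k \<in> J}"
    by (rule finite_subset) (use assms(1,2) in auto)
qed (use assms in blast)

lemma ereal_div_le_of_div_le:
  fixes t0 :: ereal and a b :: real
  assumes "t0 > 0" "b > 0" "ereal a / t0 \<le> ereal b"
  shows "ereal (a / b) \<le> t0"
proof (cases t0)
  case (real r)
  with assms have "a \<le> b * r" by (simp add: field_simps)
  with assms(2) real show ?thesis by (simp add: field_simps)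
qed (use assms in auto)

lemma sq_emp_norm: "(emp_norm n Z h)\<^sup>2 = (\<Sum>i\<in>{1..n}. (h (Z i))\<^sup>2) / real n"
  unfolding emp_norm_def by (simp add: sum_nonneg)

lemma ewa_minus_eq_agg:
  fixes f :: "'z \<Rightarrow> real" and fs :: "nat \<Rightarrow> 'z \<Rightarrow> real"
  assumes "M \<ge> 1" "\<beta> > 0"
  shows "ewa n M Z fs (\<lambda>j. 1 / real M) \<beta> (\<lambda>i. f (Z i) + \<xi> i) (Z i) - f (Z i)
    = ewa_regression.agg {1..n} {1..M} (\<lambda>j i. fs j (Z i) - f (Z i)) \<beta> \<xi> i"
proof -
  interpret ewa_regression "{1..n}" "{1..M}" "\<lambda>j i. fs j (Z i) - f (Z i)" \<beta>
    using assms by unfold_locales auto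
  have "(\<Sum>i\<in>{1..n}. (f (Z i) + \<xi> i - fs j (Z i))\<^sup>2) = cost \<xi> j" for j
    unfolding cost_def by (intro sum.cong refl) (simp add: algebra_simps)
  then have "ewa_weight n M Z fs (\<lambda>j. 1 / real M) \<beta> (\<lambda>i. f (Z i) + \<xi> i) j = weight \<xi> j" for j
    unfolding ewa_weight_def weight_def using gibbs_weight_mult_const[of "1 / real M"] assms by simp
  then show ?thesis
    using sum_weight[of \<xi>] unfolding ewa_def agg_def
    by (simp add: algebra_simps sum_subtractf sum_distrib_left[symmetric])
qed

theorem corollary1:
  fixes D :: "real measure" and t0 :: ereal and v :: "real \<Rightarrow> real"
    and n M :: nat and Z :: "nat \<Rightarrow> 'z" and f :: "'z \<Rightarrow> real"
    and fs :: "nat \<Rightarrow> 'z \<Rightarrow> real" and \<beta> L :: real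
  assumes "prob_space D" and "sets D = sets borel"
    and "integrable D (\<lambda>x. x)" and "(\<integral> x. x \<partial>D) = 0"
    and "assumption_N D t0 v"
    and "n \<ge> 1" and "M \<ge> 1"
    and "L = Max {\<bar>fs j (Z i) - fs k (Z i)\<bar> | i j k. i \<in> {1..n} \<and> j \<in> {1..M} \<and> k \<in> {1..M}}"
    and "\<beta> > 0"
    and "\<beta> \<ge> 4 * (SUP a. \<bar>v a\<bar>)"
    and "ereal (2 * L) / t0 \<le> ereal \<beta>"
  shows "(\<integral> \<xi>. (emp_norm n Z (\<lambda>z. ewa n M Z fs (\<lambda>j. 1 / real M) \<beta>
                                      (\<lambda>i. f (Z i) + \<xi> i) z - f z))\<^sup>2
            \<partial>(PiM {1..n} (\<lambda>_. D)))
         \<le> (MIN j\<in>{1..M}. (emp_norm n Z (\<lambda>z. fs j z - f z))\<^sup>2) + \<beta> * ln (real M) / real n"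
proof -
  define d where "d j i = fs j (Z i) - f (Z i)" for j i
  have "t0 > 0" using assms(5) unfolding assumption_N_def by blast
  interpret ewa_noise "{1..n}" "{1..M}" d \<beta> D t0 v L
  proof (intro ewa_noise.intro ewa_regression.intro ewa_noise_axioms.intro)
    show "ereal (2 * L / \<beta>) \<le> t0" by (rule ereal_div_le_of_div_le[OF \<open>t0 > 0\<close> assms(9,11)])
    show "\<bar>d j i - d k i\<bar> \<le> L" if "i \<in> {1..n}" "j \<in> {1..M}" "k \<in> {1..M}" for i j k
      using abs_diff_le_Max_abs_diff[OF _ _ that, of "\<lambda>j i. fs j (Z i)"]
      unfolding assms(8) d_def by simp
  qed (use assms in simp_all)
  obtain k where k: "k \<in> {1..M}"
    and min: "(MIN j\<in>{1..M}. (emp_norm n Z (\<lambda>z. fs j z - f z))\<^sup>2) = (emp_norm n Z (\<lambda>z. fs k z - f z))\<^sup>2"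
  proof -
    have "(MIN j\<in>{1..M}. (emp_norm n Z (\<lambda>z. fs j z - f z))\<^sup>2)
        \<in> (\<lambda>j. (emp_norm n Z (\<lambda>z. fs j z - f z))\<^sup>2) ` {1..M}"
      using assms(7) by (intro Min_in) auto
    then show ?thesis using that by (auto simp del: atLeastAtMost_iff)
  qed
  have "(\<integral>\<xi>. (emp_norm n Z (\<lambda>z. ewa n M Z fs (\<lambda>j. 1 / real M) \<beta> (\<lambda>i. f (Z i) + \<xi> i) z - f z))\<^sup>2
      \<partial>noise_law) = (\<integral>\<xi>. (\<Sum>i\<in>{1..n}. (agg \<xi> i)\<^sup>2) \<partial>noise_law) / real n"
    unfolding sq_emp_norm ewa_minus_eq_agg[OF assms(7,9)] d_def[abs_def] by simp
  also have "\<dots> \<le> ((\<Sum>i\<in>{1..n}. (d k i)\<^sup>2) + \<beta> * ln M) / real n"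
    using integral_sum_sq_agg_le[OF k] by (simp add: divide_right_mono)
  also have "\<dots> = (emp_norm n Z (\<lambda>z. fs k z - f z))\<^sup>2 + \<beta> * ln (real M) / real n"
    unfolding sq_emp_norm d_def by (simp add: add_divide_distrib)
  finally show ?thesis unfolding min .
qed

end
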